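(* Let $\gamma$ and $\gamma'$ be two circular curves that are mutually monotone. Then $\gamma$ and $\gamma'$ have $O(m+m')$ proper intersection points, where $m=\lVert\gamma\rVert$ and $m'=\lVert\gamma'\rVert$.
   Context: A circular curve is a curve in $\mathbb{R}^2$ homeomorphic to a closed interval that is the union of finitely many circular arcs (connected portions of circles, segments included) meeting only at endpoints; its complexity $\lVert\cdot\rVert$ is the number of its arcs plus vertices. A curve $\gamma$ is $\vec v$-monotone for $\vec v\in\mathbb{S}^1$ if there is a homeomorphism $f:[0,1]\to\gamma$ with $\langle\vec v,f(a)\rangle<\langle\vec v,f(b)\rangle$ whenever $a<b$; $\gamma,\gamma'$ are mutually monotone if some $\vec v\in\mathbb{S}^1$ makes both $\vec v$-monotone. A point $p$ is a proper intersection point of $\gamma$ and $\gamma'$ if $p\in\gamma\cap\gamma'$ and $p$ is isolated in $\gamma\cap\gamma'$. *)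

theory Defs
  imports "HOL-Analysis.Analysis"
begin

text \<open>The plane R^2 is modelled as the type complex (a real inner product space).\<close>

definition circular_arc :: "(real \<Rightarrow> complex) \<Rightarrow> bool" where
  "circular_arc g \<longleftrightarrow> arc g \<and>
     ((\<exists>c r. r > 0 \<and> path_image g \<subseteq> sphere c r) \<or>
      path_image g = closed_segment (pathstart g) (pathfinish g))"

definition arc_vertices :: "(real \<Rightarrow> complex) list \<Rightarrow> complex set" where
  "arc_vertices gs = (\<Union>g\<in>set gs. {pathstart g, pathfinish g})"

definition circular_curve :: "(real \<Rightarrow> complex) list \<Rightarrow> complex set \<Rightarrow> bool" where
  "circular_curve gs C \<longleftrightarrow>
     C homeomorphic {0..1::real} \<and>
     C = (\<Union>g\<in>set gs. path_image g) \<and>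
     (\<forall>g\<in>set gs. circular_arc g) \<and>
     (\<forall>i<length gs. \<forall>j<length gs. i \<noteq> j \<longrightarrow>
        path_image (gs!i) \<inter> path_image (gs!j) \<subseteq>
          {pathstart (gs!i), pathfinish (gs!i)} \<inter> {pathstart (gs!j), pathfinish (gs!j)})"

definition complexity :: "(real \<Rightarrow> complex) list \<Rightarrow> nat" where
  "complexity gs = length gs + card (arc_vertices gs)"

definition dir_monotone :: "complex \<Rightarrow> complex set \<Rightarrow> bool" where
  "dir_monotone v C \<longleftrightarrow> (\<exists>f h. homeomorphism {0..1::real} C f h \<and>
     (\<forall>a\<in>{0..1}. \<forall>b\<in>{0..1}. a < b \<longrightarrow> inner v (f a) < inner v (f b)))"

definition mutually_monotone :: "complex set \<Rightarrow> complex set \<Rightarrow> bool" where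
  "mutually_monotone C C' \<longleftrightarrow> (\<exists>v. norm v = 1 \<and> dir_monotone v C \<and> dir_monotone v C')"

definition proper_intersections :: "complex set \<Rightarrow> complex set \<Rightarrow> complex set" where
  "proper_intersections C C' = {p. p \<in> C \<inter> C' \<and> p isolated_in (C \<inter> C')}"

end

theory Submission
  imports Defs
begin

text \<open>
  Write points in coordinates rotated by the common monotonicity direction \<open>v\<close>. Then each
  curve is the graph of a continuous function over an interval of the \<open>v\<close>-axis, and each arc
  of it is the graph of a function whose points lie on a single line or circle. A proper
  intersection point that is not a vertex lies over the open overlap of the projections of an
  arc of each curve, and is an isolated coincidence of the two graphs there; two lines or circles
  have at most two isolated coincidences (on one and the same circle the graphs agree near every
  coincidence except at the two vertical tangents). The projections of distinct arcs of one
  curve overlap at most in an endpoint, so an overlapping pair of arcs is determined by the left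
  end of its overlap, the projection of a vertex. Hence there are at most \<open>|V|\<close> overlapping
  pairs and at most \<open>3|V| \<le> 3(m + m')\<close> proper intersection points.
\<close>

section \<open>Isolated coincidences of lines and circles\<close>

lemma finite_card_le_2_if_subset_doubleton:
  "S \<subseteq> {x, y} \<Longrightarrow> finite S \<and> card S \<le> 2"
proof -
  assume "S \<subseteq> {x, y}"
  moreover have "card {x, y} \<le> 2" by (simp add: card_insert_le_m1)
  ultimately show ?thesis by (meson card_mono finite.emptyI finite_insert finite_subset order_trans)
qed

lemma finite_card_le_2_if_subset_quadratic_roots:
  fixes a b c :: real
  assumes "a \<noteq> 0" "S \<subseteq> {t. a * t\<^sup>2 + b * t + c = 0}"
  shows "finite S \<and> card S \<le> 2"
proof (cases "S = {}")
  case False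
  then obtain x where x: "x \<in> S" by auto
  have "S \<subseteq> {x, - b / a - x}"
  proof
    fix y assume "y \<in> S"
    with x assms(2) have "a * y\<^sup>2 + b * y + c = 0" "a * x\<^sup>2 + b * x + c = 0"
      by auto
    then have "(y - x) * (a * (y + x) + b) = 0"
      by (simp add: algebra_simps power2_eq_square)
    then have "y = x \<or> a * (y + x) + b = 0" by simp
    with assms(1) show "y \<in> {x, - b / a - x}"
      by (auto simp: field_simps)
  qed
  then show ?thesis by (rule finite_card_le_2_if_subset_doubleton)
qed simp

lemma finite_card_le_2_if_subset_line_circle:
  fixes a b c d r :: real
  assumes "S \<subseteq> {t. (t - c)\<^sup>2 + (a * t + b - d)\<^sup>2 = r}"
  shows "finite S \<and> card S \<le> 2"
proof (rule finite_card_le_2_if_subset_quadratic_roots)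
  show "1 + a\<^sup>2 \<noteq> 0"
    by (metis add_pos_nonneg zero_le_power2 zero_less_one less_irrefl)
  show "S \<subseteq> {t. (1 + a\<^sup>2) * t\<^sup>2 + (2 * a * (b - d) - 2 * c) * t + (c\<^sup>2 + (b - d)\<^sup>2 - r) = 0}"
    using assms by (auto simp: algebra_simps power2_eq_square)
qed

lemma finite_card_le_2_if_subset_circle_circle:
  fixes c d r c' d' r' :: real
  assumes "(c, d, r) \<noteq> (c', d', r')"
    and "S \<subseteq> {t. \<exists>y. (t - c)\<^sup>2 + (y - d)\<^sup>2 = r \<and> (t - c')\<^sup>2 + (y - d')\<^sup>2 = r'}"
  shows "finite S \<and> card S \<le> 2"
proof -
  define k where "k = c'\<^sup>2 - c\<^sup>2 + d'\<^sup>2 - d\<^sup>2 + r - r'"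
  \<comment> \<open>Subtracting the two circle equations leaves the radical axis.\<close>
  have radical_axis: "2 * t * (c' - c) + 2 * y * (d' - d) = k"
    if "(t - c)\<^sup>2 + (y - d)\<^sup>2 = r" "(t - c')\<^sup>2 + (y - d')\<^sup>2 = r'" for t y
    using that unfolding k_def by (simp add: algebra_simps power2_eq_square)
  consider "d \<noteq> d'" | "d = d'" "c \<noteq> c'" | "d = d'" "c = c'" "r \<noteq> r'"
    using assms(1) by auto
  then show ?thesis
  proof cases
    case 1
    define e where "e = d' - d"
    define a where "a = - (c' - c) / e"
    define b where "b = k / (2 * e)"
    have "e \<noteq> 0" using 1 unfolding e_def by simp
    have "S \<subseteq> {t. (t - c)\<^sup>2 + (a * t + b - d)\<^sup>2 = r}"
    proof
      fix t assume "t \<in> S"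
      then obtain y where y: "(t - c)\<^sup>2 + (y - d)\<^sup>2 = r" "(t - c')\<^sup>2 + (y - d')\<^sup>2 = r'"
        using assms(2) by auto
      have "y * (2 * e) = k - 2 * t * (c' - c)"
        using radical_axis[OF y] unfolding e_def by (simp add: algebra_simps)
      then have "y = a * t + b"
        using \<open>e \<noteq> 0\<close> unfolding a_def b_def by (simp add: field_simps)
      with y(1) show "t \<in> {t. (t - c)\<^sup>2 + (a * t + b - d)\<^sup>2 = r}" by simp
    qed
    then show ?thesis by (rule finite_card_le_2_if_subset_line_circle)
  next
    case 2
    have "S \<subseteq> {k / (2 * (c' - c))}"
      using assms(2) radical_axis 2 by (fastforce simp: field_simps)
    then show ?thesis
      using finite_card_le_2_if_subset_doubleton by (metis insert_absorb2)
  next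
    case 3
    then have "S = {}" using assms(2) by auto
    then show ?thesis by simp
  qed
qed

definition circular_graph_on :: "real set \<Rightarrow> (real \<Rightarrow> real) \<Rightarrow> bool" where
  "circular_graph_on J y \<longleftrightarrow>
     (\<exists>a b. \<forall>t\<in>J. y t = a * t + b) \<or> (\<exists>c d r. \<forall>t\<in>J. (t - c)\<^sup>2 + (y t - d)\<^sup>2 = r)"

lemma circular_graph_on_subset:
  "circular_graph_on J y \<Longrightarrow> I \<subseteq> J \<Longrightarrow> circular_graph_on I y"
  unfolding circular_graph_on_def by blast

definition isolated_coincidences :: "real set \<Rightarrow> (real \<Rightarrow> real) \<Rightarrow> (real \<Rightarrow> real) \<Rightarrow> real set" where
  "isolated_coincidences J f g = {t. t isolated_in {s \<in> J. f s = g s}}"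

lemma isolated_coincidences_subset: "isolated_coincidences J f g \<subseteq> {t \<in> J. f t = g t}"
  unfolding isolated_coincidences_def isolated_in_def by auto

lemma isolated_coincidences_commute: "isolated_coincidences J f g = isolated_coincidences J g f"
  unfolding isolated_coincidences_def by (simp add: eq_commute)

lemma not_in_isolated_coincidences:
  assumes "open J" "t \<in> J" "e > 0" "\<And>s. s \<in> J \<Longrightarrow> dist s t < e \<Longrightarrow> f s = g s"
  shows "t \<notin> isolated_coincidences J f g"
proof -
  have "J \<inter> ball t e \<subseteq> {s \<in> J. f s = g s}"
    using assms(4) by (auto simp: dist_commute)
  moreover have "t \<in> J \<inter> ball t e" "open (J \<inter> ball t e)"
    using assms(1-3) by auto
  ultimately have "t \<in> interior {s \<in> J. f s = g s}"
    by (meson interior_maximal interiorI)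
  then show ?thesis
    unfolding isolated_coincidences_def by (auto simp: isolated_in_islimpt_iff)
qed

lemma isolated_coincidences_line_line:
  assumes "open J" "\<forall>t\<in>J. f t = a * t + b" "\<forall>t\<in>J. g t = a' * t + b'"
  shows "finite (isolated_coincidences J f g) \<and> card (isolated_coincidences J f g) \<le> 2"
proof (cases "a = a' \<and> b = b'")
  case True
  have "t \<notin> isolated_coincidences J f g" if "t \<in> J" for t
    using not_in_isolated_coincidences[OF assms(1) that zero_less_one] True assms(2,3) by simp
  then have "isolated_coincidences J f g = {}"
    using isolated_coincidences_subset by blast
  then show ?thesis by simp
next
  case False
  have "isolated_coincidences J f g \<subseteq> {(b' - b) / (a - a')}"
  proof
    fix t assume "t \<in> isolated_coincidences J f g"
    then have "t \<in> J" "f t = g t"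
      using isolated_coincidences_subset by auto
    then have "t * (a - a') = b' - b"
      using assms(2,3) by (simp add: algebra_simps)
    moreover have "a \<noteq> a'"
      using False \<open>t * (a - a') = b' - b\<close> by auto
    ultimately show "t \<in> {(b' - b) / (a - a')}"
      by (simp add: eq_divide_eq)
  qed
  then show ?thesis
    using finite_card_le_2_if_subset_doubleton by (metis insert_absorb2)
qed

lemma isolated_coincidences_line_circle:
  assumes "\<forall>t\<in>J. f t = a * t + b" "\<forall>t\<in>J. (t - c)\<^sup>2 + (g t - d)\<^sup>2 = r"
  shows "finite (isolated_coincidences J f g) \<and> card (isolated_coincidences J f g) \<le> 2"
proof (rule finite_card_le_2_if_subset_line_circle)
  show "isolated_coincidences J f g \<subseteq> {t. (t - c)\<^sup>2 + (a * t + b - d)\<^sup>2 = r}"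
  proof
    fix t assume "t \<in> isolated_coincidences J f g"
    then have "t \<in> J" "f t = g t"
      using isolated_coincidences_subset by auto
    with assms show "t \<in> {t. (t - c)\<^sup>2 + (a * t + b - d)\<^sup>2 = r}" by force
  qed
qed

lemma isolated_coincidences_distinct_circles:
  assumes "\<forall>t\<in>J. (t - c)\<^sup>2 + (f t - d)\<^sup>2 = r" "\<forall>t\<in>J. (t - c')\<^sup>2 + (g t - d')\<^sup>2 = r'"
    and "(c, d, r) \<noteq> (c', d', r')"
  shows "finite (isolated_coincidences J f g) \<and> card (isolated_coincidences J f g) \<le> 2"
proof (rule finite_card_le_2_if_subset_circle_circle[OF assms(3)])
  show "isolated_coincidences J f g \<subseteq>
      {t. \<exists>y. (t - c)\<^sup>2 + (y - d)\<^sup>2 = r \<and> (t - c')\<^sup>2 + (y - d')\<^sup>2 = r'}"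
  proof
    fix t assume "t \<in> isolated_coincidences J f g"
    then have "t \<in> J" "f t = g t"
      using isolated_coincidences_subset by auto
    with assms(1,2) show "t \<in> {t. \<exists>y. (t - c)\<^sup>2 + (y - d)\<^sup>2 = r \<and> (t - c')\<^sup>2 + (y - d')\<^sup>2 = r'}"
      by force
  qed
qed

lemma isolated_coincidences_same_circle:
  assumes "open J" "continuous_on J f" "continuous_on J g"
    and "\<forall>t\<in>J. (t - c)\<^sup>2 + (f t - d)\<^sup>2 = r" "\<forall>t\<in>J. (t - c)\<^sup>2 + (g t - d)\<^sup>2 = r"
  shows "finite (isolated_coincidences J f g) \<and> card (isolated_coincidences J f g) \<le> 2"
proof (rule finite_card_le_2_if_subset_quadratic_roots[of 1 _ "- 2 * c" "c\<^sup>2 - r"])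
  show "isolated_coincidences J f g \<subseteq> {t. 1 * t\<^sup>2 + - 2 * c * t + (c\<^sup>2 - r) = 0}"
  proof
    fix t assume t: "t \<in> isolated_coincidences J f g"
    then have "t \<in> J" "f t = g t"
      using isolated_coincidences_subset by auto
    \<comment> \<open>Away from the two vertical tangents, \<open>f\<close> and \<open>g\<close> lie on the same half of the circle
      near \<open>t\<close>, so they agree on a neighbourhood of \<open>t\<close>.\<close>
    have "f t = d"
    proof (rule ccontr)
      assume "f t \<noteq> d"
      define h where "h s = (f s - d) + (g s - d)" for s
      have "continuous_on J h"
        unfolding h_def by (intro continuous_intros assms(2,3))
      moreover have "h t \<noteq> 0"
        unfolding h_def using \<open>f t = g t\<close> \<open>f t \<noteq> d\<close> by simp
      ultimately obtain e where "e > 0" and e: "\<And>s. s \<in> J \<Longrightarrow> dist s t < e \<Longrightarrow> h s \<noteq> 0"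
        using continuous_on_open_avoid[OF _ assms(1) \<open>t \<in> J\<close>, of h 0] by (metis dist_commute)
      have "f s = g s" if "s \<in> J" "dist s t < e" for s
      proof -
        have "(f s - d)\<^sup>2 = (g s - d)\<^sup>2"
          using assms(4,5) \<open>s \<in> J\<close> by (metis add_left_cancel)
        then have "f s - d = g s - d \<or> f s - d = - (g s - d)"
          by (simp add: power2_eq_iff)
        with e[OF that] show ?thesis
          unfolding h_def by auto
      qed
      then have "t \<notin> isolated_coincidences J f g"
        by (rule not_in_isolated_coincidences[OF assms(1) \<open>t \<in> J\<close> \<open>e > 0\<close>])
      with t show False by simp
    qed
    with assms(4) \<open>t \<in> J\<close> show "t \<in> {t. 1 * t\<^sup>2 + - 2 * c * t + (c\<^sup>2 - r) = 0}"
      by (auto simp: algebra_simps power2_eq_square)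
  qed
qed simp

lemma finite_card_isolated_coincidences_le_2:
  assumes "open J" "continuous_on J f" "continuous_on J g"
    and "circular_graph_on J f" "circular_graph_on J g"
  shows "finite (isolated_coincidences J f g) \<and> card (isolated_coincidences J f g) \<le> 2"
  using assms(4,5) unfolding circular_graph_on_def
proof (elim disjE exE)
  fix a b a' b' assume "\<forall>t\<in>J. f t = a * t + b" "\<forall>t\<in>J. g t = a' * t + b'"
  then show ?thesis by (rule isolated_coincidences_line_line[OF assms(1)])
next
  fix a b c d r assume "\<forall>t\<in>J. f t = a * t + b" "\<forall>t\<in>J. (t - c)\<^sup>2 + (g t - d)\<^sup>2 = r"
  then show ?thesis by (rule isolated_coincidences_line_circle)
next
  fix a b c d r assume "\<forall>t\<in>J. (t - c)\<^sup>2 + (f t - d)\<^sup>2 = r" "\<forall>t\<in>J. g t = a * t + b"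
  then show ?thesis
    using isolated_coincidences_line_circle isolated_coincidences_commute by metis
next
  fix c d r c' d' r'
  assume F: "\<forall>t\<in>J. (t - c)\<^sup>2 + (f t - d)\<^sup>2 = r" and G: "\<forall>t\<in>J. (t - c')\<^sup>2 + (g t - d')\<^sup>2 = r'"
  show ?thesis
  proof (cases "(c, d, r) = (c', d', r')")
    case True
    with F G show ?thesis by (simp add: isolated_coincidences_same_circle[OF assms(1-3)])
  next
    case False
    with F G show ?thesis by (rule isolated_coincidences_distinct_circles)
  qed
qed

section \<open>Circular curves as graphs over a monotone direction\<close>

definition proj_lo :: "complex \<Rightarrow> (real \<Rightarrow> complex) \<Rightarrow> real" where
  "proj_lo v g = min (inner v (pathstart g)) (inner v (pathfinish g))"

definition proj_hi :: "complex \<Rightarrow> (real \<Rightarrow> complex) \<Rightarrow> real" where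
  "proj_hi v g = max (inner v (pathstart g)) (inner v (pathfinish g))"

lemma inner_complex_eq_Re_cnj_mult: "inner v x = Re (cnj v * x)"
  by (simp add: inner_complex_def)

lemma complex_eqI_rotated:
  assumes "v \<noteq> 0" "inner v x = inner v y" "Im (cnj v * x) = Im (cnj v * y)"
  shows "x = y"
proof -
  have "cnj v * x = cnj v * y"
    using assms(2,3) by (simp add: inner_complex_eq_Re_cnj_mult complex_eq_iff)
  with assms(1) show ?thesis by simp
qed

locale monotone_circular_curve =
  fixes v :: complex and gs :: "(real \<Rightarrow> complex) list" and C :: "complex set"
  assumes circular_curve: "circular_curve gs C"
    and dir_monotone: "dir_monotone v C"
    and norm_v: "norm v = 1"
begin

lemma inj_on_inner: "inj_on (inner v) C"
proof
  fix x y assume "x \<in> C" "y \<in> C" and eq: "inner v x = inner v y"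
  obtain f h where hom: "homeomorphism {0..1::real} C f h"
    and mono: "\<forall>a\<in>{0..1}. \<forall>b\<in>{0..1}. a < b \<longrightarrow> inner v (f a) < inner v (f b)"
    using dir_monotone unfolding dir_monotone_def by blast
  have "h x \<in> {0..1}" "f (h x) = x" "h y \<in> {0..1}" "f (h y) = y"
    using hom \<open>x \<in> C\<close> \<open>y \<in> C\<close> by (auto simp: homeomorphism_def)
  with mono eq have "h x = h y"
    by (metis linorder_neqE_linordered_idom less_irrefl)
  with \<open>f (h x) = x\<close> \<open>f (h y) = y\<close> show "x = y" by metis
qed

lemma compact: "compact C"
  using dir_monotone unfolding dir_monotone_def
  by (metis compact_Icc compact_continuous_image homeomorphism_cont1 homeomorphism_image1)

text \<open>Since \<open>inner v x = Re (cnj v * x)\<close>, the map \<open>x \<mapsto> cnj v * x\<close> rotates \<open>v\<close> onto the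
  first axis; \<open>lift\<close> recovers a point of \<open>C\<close> from its first coordinate and \<open>height\<close> is its
  second coordinate.\<close>

definition lift :: "real \<Rightarrow> complex" where
  "lift = inv_into C (inner v)"

lemma lift_inner [simp]: "x \<in> C \<Longrightarrow> lift (inner v x) = x"
  unfolding lift_def using inj_on_inner by simp

lemma inner_lift [simp]: "t \<in> inner v ` C \<Longrightarrow> inner v (lift t) = t"
  unfolding lift_def by (simp add: f_inv_into_f)

lemma lift_in: "t \<in> inner v ` C \<Longrightarrow> lift t \<in> C"
  unfolding lift_def by (rule inv_into_into)

lemma continuous_on_lift: "continuous_on (inner v ` C) lift"
  by (rule continuous_on_inv[OF _ compact]) (auto intro: continuous_intros)

definition height :: "real \<Rightarrow> real" where
  "height t = Im (cnj v * lift t)"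

lemma arc_in_curve:
  assumes "g \<in> set gs" shows "path_image g \<subseteq> C" "circular_arc g" "arc g"
  using assms circular_curve unfolding circular_curve_def circular_arc_def by auto

lemma inner_image_arc:
  assumes "g \<in> set gs" shows "inner v ` path_image g = {proj_lo v g..proj_hi v g}"
proof -
  have "inner v ` path_image g = (inner v \<circ> g) ` closed_segment 0 1"
    by (simp add: path_image_def closed_segment_eq_real_ivl image_comp)
  also have "\<dots> = closed_segment ((inner v \<circ> g) 0) ((inner v \<circ> g) 1)"
  proof (rule continuous_injective_image_segment_1)
    show "continuous_on (closed_segment 0 1) (inner v \<circ> g)"
      using arc_in_curve(3)[OF assms]
      by (auto simp: arc_def path_def closed_segment_eq_real_ivl intro!: continuous_intros)
    have "inj_on (inner v) (g ` {0..1})"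
      using inj_on_subset[OF inj_on_inner arc_in_curve(1)[OF assms]] by (simp add: path_image_def)
    with arc_in_curve(3)[OF assms] show "inj_on (inner v \<circ> g) (closed_segment 0 1)"
      by (auto simp: arc_def closed_segment_eq_real_ivl intro: comp_inj_on)
  qed
  also have "\<dots> = {proj_lo v g..proj_hi v g}"
    by (auto simp: proj_lo_def proj_hi_def pathstart_def pathfinish_def closed_segment_eq_real_ivl)
  finally show ?thesis .
qed

lemma inner_pathstart_neq_pathfinish:
  assumes "g \<in> set gs" shows "inner v (pathstart g) \<noteq> inner v (pathfinish g)"
  using arc_distinct_ends[OF arc_in_curve(3)[OF assms]] arc_in_curve(1)[OF assms]
    inj_on_inner by (metis inj_on_contraD pathstart_in_path_image pathfinish_in_path_image subsetD)

lemma proj_arc_subset: "g \<in> set gs \<Longrightarrow> {proj_lo v g..proj_hi v g} \<subseteq> inner v ` C"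
  using inner_image_arc arc_in_curve(1) by blast

lemma lift_in_arc:
  assumes "g \<in> set gs" "t \<in> {proj_lo v g..proj_hi v g}" shows "lift t \<in> path_image g"
proof -
  obtain x where "x \<in> path_image g" "t = inner v x"
    using assms inner_image_arc by blast
  with arc_in_curve(1)[OF assms(1)] show ?thesis by auto
qed

lemma inner_in_proj_interior:
  assumes "g \<in> set gs" "x \<in> path_image g" "x \<notin> {pathstart g, pathfinish g}"
  shows "inner v x \<in> {proj_lo v g<..<proj_hi v g}"
proof -
  have "inner v x \<noteq> inner v y" if "y \<in> {pathstart g, pathfinish g}" for y
    using that assms inj_on_inner arc_in_curve(1)[OF assms(1)]
    by (metis inj_onD insertE empty_iff pathstart_in_path_image pathfinish_in_path_image subsetD)
  then have "inner v x \<noteq> inner v (pathstart g)" "inner v x \<noteq> inner v (pathfinish g)"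
    by auto
  moreover have "inner v x \<in> {proj_lo v g..proj_hi v g}"
    using inner_image_arc[OF assms(1)] assms(2) by blast
  ultimately show ?thesis
    unfolding proj_lo_def proj_hi_def by (auto simp: min_def max_def)
qed

lemma arcs_inter_subset_endpoints:
  assumes "g \<in> set gs" "h \<in> set gs" "g \<noteq> h"
  shows "path_image g \<inter> path_image h \<subseteq> {pathstart g, pathfinish g}"
proof -
  obtain i j where "i < length gs" "gs ! i = g" "j < length gs" "gs ! j = h"
    using assms(1,2) by (meson in_set_conv_nth)
  with assms(3) circular_curve show ?thesis
    unfolding circular_curve_def by blast
qed

\<comment> \<open>The projections of distinct arcs overlap at most in an endpoint, since otherwise the lift of
  a whole interval would lie in the finite intersection of the two arcs.\<close>
lemma arc_eq_if_proj_overlap: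
  assumes "g \<in> set gs" "h \<in> set gs"
    and "s \<in> {proj_lo v g..<proj_hi v g}" "s \<in> {proj_lo v h..<proj_hi v h}"
  shows "g = h"
proof (rule ccontr)
  assume "g \<noteq> h"
  define u where "u = min (proj_hi v g) (proj_hi v h)"
  have J: "{s<..<u} \<subseteq> {proj_lo v g..proj_hi v g} \<inter> {proj_lo v h..proj_hi v h}"
    using assms(3,4) unfolding u_def by auto
  have "lift ` {s<..<u} \<subseteq> path_image g \<inter> path_image h"
    using J lift_in_arc[OF assms(1)] lift_in_arc[OF assms(2)] by blast
  then have "lift ` {s<..<u} \<subseteq> {pathstart g, pathfinish g}"
    using arcs_inter_subset_endpoints[OF assms(1,2) \<open>g \<noteq> h\<close>] by blast
  then have "finite (lift ` {s<..<u})"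
    by (rule finite_subset) simp
  moreover have "inj_on lift {s<..<u}"
  proof (rule inj_on_inverseI[of _ "inner v"])
    show "inner v (lift t) = t" if "t \<in> {s<..<u}" for t
      using that J proj_arc_subset[OF assms(1)] by (metis IntD1 inner_lift subsetD)
  qed
  ultimately have "finite {s<..<u}"
    using finite_image_iff by blast
  moreover have "s < u"
    using assms(3,4) unfolding u_def by auto
  ultimately show False
    using infinite_Ioo by blast
qed

lemma continuous_on_height: "continuous_on (inner v ` C) height"
  unfolding height_def by (intro continuous_intros continuous_on_lift)

lemma Re_cnj_mult_lift: "t \<in> inner v ` C \<Longrightarrow> Re (cnj v * lift t) = t"
  using inner_lift by (simp add: inner_complex_eq_Re_cnj_mult)

lemma height_on_circular_arc:
  assumes "g \<in> set gs" "path_image g \<subseteq> sphere c r"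
  shows "\<forall>t\<in>{proj_lo v g..proj_hi v g}.
           (t - Re (cnj v * c))\<^sup>2 + (height t - Im (cnj v * c))\<^sup>2 = r\<^sup>2"
proof
  fix t assume t: "t \<in> {proj_lo v g..proj_hi v g}"
  have "norm (lift t - c) = r"
    using assms(2) lift_in_arc[OF assms(1) t] by (auto simp: dist_norm norm_minus_commute)
  then have "(norm (cnj v * lift t - cnj v * c))\<^sup>2 = r\<^sup>2"
    using norm_v by (simp add: norm_mult flip: right_diff_distrib)
  then have eq: "(Re (cnj v * lift t) - Re (cnj v * c))\<^sup>2 + (Im (cnj v * lift t) - Im (cnj v * c))\<^sup>2 = r\<^sup>2"
    by (simp only: cmod_power2 minus_complex.simps)
  have "Re (cnj v * lift t) = t"
    using Re_cnj_mult_lift proj_arc_subset[OF assms(1)] t by blast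
  with eq show "(t - Re (cnj v * c))\<^sup>2 + (height t - Im (cnj v * c))\<^sup>2 = r\<^sup>2"
    unfolding height_def by simp
qed

lemma height_on_straight_arc:
  assumes "g \<in> set gs" "path_image g = closed_segment (pathstart g) (pathfinish g)"
  shows "\<exists>a b. \<forall>t\<in>{proj_lo v g..proj_hi v g}. height t = a * t + b"
proof -
  define A where "A = cnj v * pathstart g"
  define B where "B = cnj v * pathfinish g"
  define e where "e = Re B - Re A"
  have "e \<noteq> 0"
    using inner_pathstart_neq_pathfinish[OF assms(1)]
    unfolding e_def A_def B_def inner_complex_eq_Re_cnj_mult by simp
  define a where "a = (Im B - Im A) / e"
  define b where "b = Im A - Re A * a"
  have "height t = a * t + b" if t: "t \<in> {proj_lo v g..proj_hi v g}" for t
  proof -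
    obtain u where u: "lift t = (1 - u) *\<^sub>R pathstart g + u *\<^sub>R pathfinish g"
      using lift_in_arc[OF assms(1) t] assms(2) unfolding closed_segment_def by blast
    have z: "cnj v * lift t = of_real (1 - u) * A + of_real u * B"
      unfolding u A_def B_def by (simp add: scaleR_conv_of_real algebra_simps)
    have "t = Re (cnj v * lift t)"
      using Re_cnj_mult_lift proj_arc_subset[OF assms(1)] t by (metis subsetD)
    also have "\<dots> = Re A + u * e"
      unfolding z e_def by (simp add: algebra_simps)
    finally have hu: "u = (t - Re A) / e"
      using \<open>e \<noteq> 0\<close> by (simp add: field_simps)
    have "height t = Im A + u * (Im B - Im A)"
      unfolding height_def z by (simp add: algebra_simps)
    then show ?thesis
      using hu unfolding a_def b_def by (simp add: divide_simps algebra_simps)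
  qed
  then show ?thesis by blast
qed

lemma circular_graph_on_height:
  assumes "g \<in> set gs" shows "circular_graph_on {proj_lo v g..proj_hi v g} height"
  using arc_in_curve(2)[OF assms] unfolding circular_arc_def circular_graph_on_def
  by (metis height_on_circular_arc[OF assms] height_on_straight_arc[OF assms])

end

section \<open>Counting proper intersections\<close>

locale monotone_circular_curve_pair =
  A: monotone_circular_curve v gs C + B: monotone_circular_curve v gs' C' for v gs C gs' C'
begin

definition vertices :: "complex set" where
  "vertices = arc_vertices gs \<union> arc_vertices gs'"

definition overlap :: "(real \<Rightarrow> complex) \<Rightarrow> (real \<Rightarrow> complex) \<Rightarrow> real set" where
  "overlap g g' = {max (proj_lo v g) (proj_lo v g')<..<min (proj_hi v g) (proj_hi v g')}"

definition overlapping_pairs :: "((real \<Rightarrow> complex) \<times> (real \<Rightarrow> complex)) set" where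
  "overlapping_pairs = {(g, g'). g \<in> set gs \<and> g' \<in> set gs' \<and> overlap g g' \<noteq> {}}"

definition crossings :: "(real \<Rightarrow> complex) \<Rightarrow> (real \<Rightarrow> complex) \<Rightarrow> complex set" where
  "crossings g g' = A.lift ` isolated_coincidences (overlap g g') A.height B.height"

lemma finite_vertices: "finite vertices"
  by (simp add: vertices_def arc_vertices_def)

lemma endpoints_in_vertices:
  "g \<in> set gs \<or> g \<in> set gs' \<Longrightarrow> pathstart g \<in> vertices \<and> pathfinish g \<in> vertices"
  by (auto simp: vertices_def arc_vertices_def)

lemma overlap_subset_proj:
  "overlap g g' \<subseteq> {proj_lo v g..proj_hi v g}" "overlap g g' \<subseteq> {proj_lo v g'..proj_hi v g'}"
  unfolding overlap_def by auto

lemma overlap_subset_inner_image: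
  assumes "g \<in> set gs" "g' \<in> set gs'"
  shows "overlap g g' \<subseteq> inner v ` C" "overlap g g' \<subseteq> inner v ` C'"
  using overlap_subset_proj A.proj_arc_subset[OF assms(1)] B.proj_arc_subset[OF assms(2)] by blast+

lemma lift_eq_if_height_eq:
  assumes "g \<in> set gs" "g' \<in> set gs'" "s \<in> overlap g g'" "A.height s = B.height s"
  shows "A.lift s = B.lift s"
proof (rule complex_eqI_rotated)
  show "v \<noteq> 0" using A.norm_v by auto
  show "inner v (A.lift s) = inner v (B.lift s)"
    using overlap_subset_inner_image[OF assms(1,2)] assms(3) by (metis A.inner_lift B.inner_lift subsetD)
  show "Im (cnj v * A.lift s) = Im (cnj v * B.lift s)"
    using assms(4) unfolding A.height_def B.height_def .
qed

lemma finite_overlapping_pairs: "finite overlapping_pairs"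
  by (rule finite_subset[of _ "set gs \<times> set gs'"]) (auto simp: overlapping_pairs_def)

lemma card_overlapping_pairs_le: "card overlapping_pairs \<le> card vertices"
proof -
  define left where "left = (\<lambda>(g, g'). max (proj_lo v g) (proj_lo v g'))"
  have "inj_on left overlapping_pairs"
  proof (rule inj_onI, clarify)
    fix g g' h h'
    assume gg: "(g, g') \<in> overlapping_pairs" and hh: "(h, h') \<in> overlapping_pairs"
      and eq: "left (g, g') = left (h, h')"
    let ?s = "max (proj_lo v g) (proj_lo v g')"
    have "?s < proj_hi v g" "?s < proj_hi v g'" "?s < proj_hi v h" "?s < proj_hi v h'"
      using gg hh eq by (auto simp: overlapping_pairs_def overlap_def left_def)
    with gg hh eq show "g = h \<and> g' = h'"
      using A.arc_eq_if_proj_overlap[of g h ?s] B.arc_eq_if_proj_overlap[of g' h' ?s]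
      by (auto simp: overlapping_pairs_def left_def)
  qed
  moreover have "left ` overlapping_pairs \<subseteq> inner v ` vertices"
    using endpoints_in_vertices
    by (fastforce simp: overlapping_pairs_def left_def proj_lo_def min_def max_def)
  ultimately have "card overlapping_pairs \<le> card (inner v ` vertices)"
    by (metis card_image card_mono finite_vertices finite_imageI)
  also have "\<dots> \<le> card vertices"
    by (rule card_image_le[OF finite_vertices])
  finally show ?thesis .
qed

lemma finite_card_crossings_le_2:
  assumes "(g, g') \<in> overlapping_pairs"
  shows "finite (crossings g g') \<and> card (crossings g g') \<le> 2"
proof -
  have g: "g \<in> set gs" "g' \<in> set gs'"
    using assms by (auto simp: overlapping_pairs_def)
  have "finite (isolated_coincidences (overlap g g') A.height B.height) \<and>
      card (isolated_coincidences (overlap g g') A.height B.height) \<le> 2"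
  proof (rule finite_card_isolated_coincidences_le_2)
    show "open (overlap g g')" by (simp add: overlap_def)
    show "continuous_on (overlap g g') A.height" "continuous_on (overlap g g') B.height"
      using overlap_subset_inner_image[OF g] A.continuous_on_height B.continuous_on_height
      by (auto intro: continuous_on_subset)
    show "circular_graph_on (overlap g g') A.height"
      using A.circular_graph_on_height[OF g(1)] overlap_subset_proj(1) by (rule circular_graph_on_subset)
    show "circular_graph_on (overlap g g') B.height"
      using B.circular_graph_on_height[OF g(2)] overlap_subset_proj(2) by (rule circular_graph_on_subset)
  qed
  then show ?thesis
    unfolding crossings_def using card_image_le order_trans by blast
qed

lemma proper_intersection_in_overlap:
  assumes "p \<in> C" "p \<in> C'" "p \<notin> vertices"
  obtains g g' where "g \<in> set gs" "g' \<in> set gs'" "inner v p \<in> overlap g g'"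
proof -
  obtain g g' where g: "g \<in> set gs" "p \<in> path_image g" and g': "g' \<in> set gs'" "p \<in> path_image g'"
    using assms(1,2) circular_curve_def A.circular_curve B.circular_curve by auto
  have "inner v p \<in> {proj_lo v g<..<proj_hi v g}"
    using A.inner_in_proj_interior[OF g] endpoints_in_vertices[of g] g(1) assms(3) by blast
  moreover have "inner v p \<in> {proj_lo v g'<..<proj_hi v g'}"
    using B.inner_in_proj_interior[OF g'] endpoints_in_vertices[of g'] g'(1) assms(3) by blast
  ultimately show ?thesis
    using that g(1) g'(1) by (auto simp: overlap_def)
qed

lemma inner_isolated_coincidence:
  assumes g: "g \<in> set gs" "g' \<in> set gs'"
    and p: "p isolated_in (C \<inter> C')" and t: "inner v p \<in> overlap g g'"
  shows "inner v p \<in> isolated_coincidences (overlap g g') A.height B.height"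
proof -
  define J where "J = overlap g g'"
  have J: "J \<subseteq> inner v ` C" "J \<subseteq> inner v ` C'"
    unfolding J_def using overlap_subset_inner_image[OF g] .
  have "p \<in> C" "p \<in> C'"
    using p by (auto simp: isolated_in_def)
  obtain e where "e > 0" and e: "\<And>y. y \<in> C \<inter> C' \<Longrightarrow> dist p y < e \<Longrightarrow> y = p"
    using isolated_inE_dist[OF p] by blast
  obtain d where "d > 0"
    and d: "\<And>s. s \<in> inner v ` C \<Longrightarrow> dist s (inner v p) < d \<Longrightarrow> dist (A.lift s) p < e"
    using A.continuous_on_lift \<open>p \<in> C\<close> \<open>e > 0\<close> unfolding continuous_on_iff
    by (metis A.lift_inner imageI)
  have "A.height (inner v p) = B.height (inner v p)"
    using \<open>p \<in> C\<close> \<open>p \<in> C'\<close> by (simp add: A.height_def B.height_def)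
  moreover have "s = inner v p"
    if "s \<in> J" "A.height s = B.height s" "dist (inner v p) s < d" for s
  proof -
    have "A.lift s \<in> C \<inter> C'"
      using that J A.lift_in B.lift_in lift_eq_if_height_eq[OF g] unfolding J_def
      by (metis IntI subsetD)
    moreover have "dist p (A.lift s) < e"
      using d[OF subsetD[OF J(1) that(1)]] that(3) by (simp add: dist_commute)
    ultimately show ?thesis
      using e that(1) J A.inner_lift by (metis subsetD)
  qed
  ultimately show ?thesis
    unfolding isolated_coincidences_def isolated_in_dist_Ex_iff J_def[symmetric]
    using t \<open>d > 0\<close> J_def by blast
qed

lemma proper_intersections_subset:
  "proper_intersections C C' \<subseteq> vertices \<union> (\<Union>(g, g')\<in>overlapping_pairs. crossings g g')"
proof
  fix p assume p: "p \<in> proper_intersections C C'"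
  then have "p \<in> C" "p \<in> C'" "p isolated_in (C \<inter> C')"
    by (auto simp: proper_intersections_def)
  show "p \<in> vertices \<union> (\<Union>(g, g')\<in>overlapping_pairs. crossings g g')"
  proof (cases "p \<in> vertices")
    case False
    then obtain g g' where g: "g \<in> set gs" "g' \<in> set gs'" and t: "inner v p \<in> overlap g g'"
      using proper_intersection_in_overlap \<open>p \<in> C\<close> \<open>p \<in> C'\<close> by blast
    then have "(g, g') \<in> overlapping_pairs"
      by (auto simp: overlapping_pairs_def)
    moreover have "p \<in> crossings g g'"
      using inner_isolated_coincidence[OF g \<open>p isolated_in (C \<inter> C')\<close> t] \<open>p \<in> C\<close>
      unfolding crossings_def by (metis A.lift_inner imageI)
    ultimately show ?thesis by blast
  qed simp
qed

lemma finite_card_proper_intersections_le: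
  "finite (proper_intersections C C') \<and> card (proper_intersections C C') \<le> 3 * card vertices"
proof -
  let ?X = "\<Union>(g, g')\<in>overlapping_pairs. crossings g g'"
  have crossings: "finite (case_prod crossings pq) \<and> card (case_prod crossings pq) \<le> 2"
    if "pq \<in> overlapping_pairs" for pq
    using that finite_card_crossings_le_2 by (cases pq) simp
  have "finite ?X"
    using finite_overlapping_pairs crossings by auto
  have "card ?X \<le> (\<Sum>pq\<in>overlapping_pairs. card (case_prod crossings pq))"
    by (rule card_UN_le[OF finite_overlapping_pairs])
  also have "\<dots> \<le> (\<Sum>_\<in>overlapping_pairs. 2)"
    by (rule sum_mono) (use crossings in auto)
  also have "\<dots> \<le> 2 * card vertices"
    using card_overlapping_pairs_le by simp
  finally have "card ?X \<le> 2 * card vertices" .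
  have "finite (proper_intersections C C')"
    using proper_intersections_subset finite_vertices \<open>finite ?X\<close> finite_subset by blast
  moreover have "card (proper_intersections C C') \<le> card vertices + card ?X"
    using proper_intersections_subset finite_vertices \<open>finite ?X\<close>
    by (meson card_Un_le card_mono finite_UnI order_trans)
  ultimately show ?thesis
    using \<open>card ?X \<le> 2 * card vertices\<close> by simp
qed

lemma card_vertices_le_complexity: "card vertices \<le> complexity gs + complexity gs'"
  unfolding vertices_def complexity_def using card_Un_le by (metis add_mono le_add2 order_trans)

end

theorem mainTheorem12:
  shows "\<exists>K::real. \<forall>gs gs' C C'.
     circular_curve gs C \<longrightarrow> circular_curve gs' C' \<longrightarrow> mutually_monotone C C' \<longrightarrow>
     finite (proper_intersections C C') \<and>
     real (card (proper_intersections C C')) \<le> K * real (complexity gs + complexity gs')"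
proof (intro exI[of _ 3] allI impI)
  fix gs gs' C C'
  assume "circular_curve gs C" "circular_curve gs' C'" "mutually_monotone C C'"
  then obtain v where "monotone_circular_curve_pair v gs C gs' C'"
    unfolding mutually_monotone_def monotone_circular_curve_pair_def monotone_circular_curve_def
    by blast
  then interpret monotone_circular_curve_pair v gs C gs' C' .
  have "card (proper_intersections C C') \<le> 3 * (complexity gs + complexity gs')"
    using conjunct2[OF finite_card_proper_intersections_le] card_vertices_le_complexity
    by (meson le_trans mult_le_mono2)
  then have "real (card (proper_intersections C C')) \<le> real (3 * (complexity gs + complexity gs'))"
    by (rule of_nat_mono)
  then show "finite (proper_intersections C C') \<and>
      real (card (proper_intersections C C')) \<le> 3 * real (complexity gs + complexity gs')"
    using finite_card_proper_intersections_le by simp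
qed

end
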